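(* Let $f$ be a noisy process with noise variance $\sigma^2>0$ and $\pi_f$ its posterior prediction map. Then $\pi_f$ is continuous: if $D_i\to D$ in $(\mathcal D,d_{\mathcal D})$, then $\pi_f(D_i)\rightharpoonup\pi_f(D)$ in the sense of weak convergence of noisy processes.
   Context: A stochastic process $f$ on $\mathbb R$ is noisy with noise variance $\sigma^2>0$ if $f=f^{\mathrm s}+f^{\mathrm n}$ with $f^{\mathrm s},f^{\mathrm n}$ independent, $f^{\mathrm s}$ (smooth part) having continuous sample paths, and $(f^{\mathrm n}(x_1),\dots,f^{\mathrm n}(x_n))\sim\mathcal N(\mathbf 0,\sigma^2\mathbf I_n)$ for pairwise distinct $x_i$. Data sets: $\mathcal D=\bigcup_{n\ge0}(\mathbb R\times\mathbb R)^n$, $D=(\mathbf x,\mathbf y)$, with metric $d_{\mathcal D}(D_1,D_2)=\|\mathbf x_1-\mathbf x_2\|_2+\|\mathbf y_1-\mathbf y_2\|_2$ if $|\mathbf x_1|=|\mathbf x_2|$ and $\infty$ otherwise. Posterior prediction map: for $D=(\mathbf x,\mathbf y)$, let $f^{\mathrm s}_D$ have law $\mu^{\mathrm s}_D$ with $\frac{d\mu^{\mathrm s}_D}{d\mu^{\mathrm s}}(g)=\frac{\mathcal N(\mathbf y\mid g(\mathbf x),\sigma^2\mathbf I)}{\mathbb E[\mathcal N(\mathbf y\mid f^{\mathrm s}(\mathbf x),\sigma^2\mathbf I)]}$, where $\mu^{\mathrm s}$ is the law of $f^{\mathrm s}$ on $C(\mathbb R,\mathbb R)$; $\pi_f(D)$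 is the noisy process $f^{\mathrm s}_D+\hat f^{\mathrm n}$ with $\hat f^{\mathrm n}$ an independent copy of $f^{\mathrm n}$. Weak convergence of noisy processes: $f_i\rightharpoonup f$ iff $f^{\mathrm s}_i\rightharpoonup f^{\mathrm s}$ weakly as random elements of $C(\mathbb R,\mathbb R)$ with the topology of uniform convergence on compact sets, and the noise variances converge. *)

theory Defs
  imports "HOL-Probability.Probability"
begin

definition Cspace :: "(real \<Rightarrow> real) set" where
  "Cspace = {g. continuous_on UNIV g}"

definition cu_topology :: "(real \<Rightarrow> real) topology" where
  "cu_topology = topology (\<lambda>U. U \<subseteq> Cspace \<and>
     (\<forall>g\<in>U. \<exists>K e. compact K \<and> e > 0 \<and> {h\<in>Cspace. \<forall>x\<in>K. \<bar>h x - g x\<bar> < e} \<subseteq> U))"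

definition borel_of_top :: "'a topology \<Rightarrow> 'a measure" where
  "borel_of_top T = sigma (topspace T) {U. openin T U}"

definition Cborel :: "(real \<Rightarrow> real) measure" where
  "Cborel = borel_of_top cu_topology"

definition weak_conv_C :: "(nat \<Rightarrow> (real \<Rightarrow> real) measure) \<Rightarrow> (real \<Rightarrow> real) measure \<Rightarrow> bool" where
  "weak_conv_C \<mu>s \<mu> \<longleftrightarrow>
     (\<forall>h. continuous_map cu_topology euclideanreal h \<and> (\<exists>B. \<forall>g\<in>Cspace. \<bar>h g\<bar> \<le> B) \<longrightarrow>
        (\<lambda>i. \<integral>g. h g \<partial>(\<mu>s i)) \<longlonglongrightarrow> (\<integral>g. h g \<partial>\<mu>))"

definition noisy_process ::
  "'w measure \<Rightarrow> ('w \<Rightarrow> real \<Rightarrow> real) \<Rightarrow> ('w \<Rightarrow> real \<Rightarrow> real) \<Rightarrow> real \<Rightarrow> bool" where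
  "noisy_process P fs fn \<sigma> \<longleftrightarrow>
     prob_space P \<and> \<sigma> > 0 \<and>
     fs \<in> measurable P Cborel \<and>
     (\<forall>\<omega>\<in>space P. continuous_on UNIV (fs \<omega>)) \<and>
     fn \<in> measurable P (PiM UNIV (\<lambda>_. borel)) \<and>
     prob_space.indep_var P Cborel fs (PiM UNIV (\<lambda>_. borel)) fn \<and>
     prob_space.indep_vars P (\<lambda>_. borel) (\<lambda>x \<omega>. fn \<omega> x) UNIV \<and>
     (\<forall>x. distributed P lborel (\<lambda>\<omega>. fn \<omega> x) (normal_density 0 \<sigma>))"

definition smooth_law :: "'w measure \<Rightarrow> ('w \<Rightarrow> real \<Rightarrow> real) \<Rightarrow> (real \<Rightarrow> real) measure" where
  "smooth_law P fs = distr P Cborel fs"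

type_synonym dataset = "(real \<times> real) list"

definition dD :: "dataset \<Rightarrow> dataset \<Rightarrow> ereal" where
  "dD D1 D2 = (if length D1 = length D2 then
      ereal (sqrt (\<Sum>k<length D1. (fst (D1!k) - fst (D2!k))^2) +
             sqrt (\<Sum>k<length D1. (snd (D1!k) - snd (D2!k))^2))
    else \<infinity>)"

definition gauss_lik :: "real \<Rightarrow> dataset \<Rightarrow> (real \<Rightarrow> real) \<Rightarrow> real" where
  "gauss_lik \<sigma> D g = (\<Prod>k<length D. normal_density (g (fst (D!k))) \<sigma> (snd (D!k)))"

definition post_smooth :: "(real \<Rightarrow> real) measure \<Rightarrow> real \<Rightarrow> dataset \<Rightarrow> (real \<Rightarrow> real) measure" where
  "post_smooth \<mu> \<sigma> D =
     density \<mu> (\<lambda>g. ennreal (gauss_lik \<sigma> D g / (\<integral>g'. gauss_lik \<sigma> D g' \<partial>\<mu>)))"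

text \<open>A noisy process is represented (up to law) by the law of its smooth part and its
  noise variance; the posterior prediction pi_f(D) = fs_D + independent copy of fn.\<close>
definition post_pred :: "'w measure \<Rightarrow> ('w \<Rightarrow> real \<Rightarrow> real) \<Rightarrow> real \<Rightarrow> dataset
    \<Rightarrow> (real \<Rightarrow> real) measure \<times> real" where
  "post_pred P fs \<sigma> D = (post_smooth (smooth_law P fs) \<sigma> D, \<sigma>^2)"

definition noisy_weak_conv ::
  "(nat \<Rightarrow> (real \<Rightarrow> real) measure \<times> real) \<Rightarrow> (real \<Rightarrow> real) measure \<times> real \<Rightarrow> bool" where
  "noisy_weak_conv fs f \<longleftrightarrow>
     weak_conv_C (\<lambda>i. fst (fs i)) (fst f) \<and> (\<lambda>i. snd (fs i)) \<longlonglongrightarrow> snd f"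

end

theory Submission
  imports Defs
begin

text \<open>The posterior law has density L_D / Z(D) with respect to the prior law of the smooth
  part, where L_D is the Gaussian likelihood and Z(D) its integral. For a continuous path g,
  L_D(g) is continuous in the data, and for data sets of a fixed size n it is bounded by
  (2 pi sigma^2)^(-n/2). Dominated convergence therefore gives convergence of Z(D_i) and of
  the integrals of L_{D_i} h for every bounded continuous functional h, and Z(D) > 0 because
  L_D is strictly positive; so the quotients converge. The noise variance does not depend
  on the data.\<close>

lemma istopology_cu_topology:
  "istopology (\<lambda>U. U \<subseteq> Cspace \<and>
     (\<forall>g\<in>U. \<exists>K e. compact K \<and> e > 0 \<and> {h\<in>Cspace. \<forall>x\<in>K. \<bar>h x - g x\<bar> < e} \<subseteq> U))"
  unfolding istopology_def
proof (intro conjI allI impI)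
  fix S T :: "(real \<Rightarrow> real) set"
  assume S: "S \<subseteq> Cspace \<and> (\<forall>g\<in>S. \<exists>K e. compact K \<and> e > 0 \<and> {h\<in>Cspace. \<forall>x\<in>K. \<bar>h x - g x\<bar> < e} \<subseteq> S)"
    and T: "T \<subseteq> Cspace \<and> (\<forall>g\<in>T. \<exists>K e. compact K \<and> e > 0 \<and> {h\<in>Cspace. \<forall>x\<in>K. \<bar>h x - g x\<bar> < e} \<subseteq> T)"
  show "S \<inter> T \<subseteq> Cspace" using S by blast
  show "\<forall>g\<in>S \<inter> T. \<exists>K e. compact K \<and> e > 0 \<and> {h\<in>Cspace. \<forall>x\<in>K. \<bar>h x - g x\<bar> < e} \<subseteq> S \<inter> T"
  proof
    fix g assume "g \<in> S \<inter> T"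
    then obtain K1 e1 K2 e2 where "compact K1" "e1 > 0" "{h\<in>Cspace. \<forall>x\<in>K1. \<bar>h x - g x\<bar> < e1} \<subseteq> S"
      and "compact K2" "e2 > 0" "{h\<in>Cspace. \<forall>x\<in>K2. \<bar>h x - g x\<bar> < e2} \<subseteq> T"
      using S T by blast
    then show "\<exists>K e. compact K \<and> e > 0 \<and> {h\<in>Cspace. \<forall>x\<in>K. \<bar>h x - g x\<bar> < e} \<subseteq> S \<inter> T"
      by (intro exI[of _ "K1 \<union> K2"] exI[of _ "min e1 e2"]) auto
  qed
next
  fix KK :: "(real \<Rightarrow> real) set set"
  assume KK: "\<forall>U\<in>KK. U \<subseteq> Cspace \<and> (\<forall>g\<in>U. \<exists>K e. compact K \<and> e > 0 \<and> {h\<in>Cspace. \<forall>x\<in>K. \<bar>h x - g x\<bar> < e} \<subseteq> U)"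
  then show "\<Union>KK \<subseteq> Cspace" by blast
  show "\<forall>g\<in>\<Union>KK. \<exists>K e. compact K \<and> e > 0 \<and> {h\<in>Cspace. \<forall>x\<in>K. \<bar>h x - g x\<bar> < e} \<subseteq> \<Union>KK"
    using KK by (meson Union_iff Sup_upper subset_trans)
qed

lemma openin_cu_topology:
  "openin cu_topology U \<longleftrightarrow> U \<subseteq> Cspace \<and>
     (\<forall>g\<in>U. \<exists>K e. compact K \<and> e > 0 \<and> {h\<in>Cspace. \<forall>x\<in>K. \<bar>h x - g x\<bar> < e} \<subseteq> U)"
  unfolding cu_topology_def using topology_inverse'[OF istopology_cu_topology] by simp

lemma topspace_cu_topology: "topspace cu_topology = Cspace"
proof -
  have "openin cu_topology Cspace" unfolding openin_cu_topology
    by (auto intro!: exI[of _ "{}"] exI[of _ 1])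
  then show ?thesis
    by (meson openin_cu_topology openin_subset openin_topspace subset_antisym)
qed

lemma space_Cborel: "space Cborel = Cspace"
  unfolding Cborel_def borel_of_top_def
  by (subst space_measure_of_conv) (auto simp: topspace_cu_topology dest: openin_subset)

lemma openin_cu_topology_imp_sets_Cborel: "openin cu_topology U \<Longrightarrow> U \<in> sets Cborel"
  unfolding Cborel_def borel_of_top_def
  by (subst sets_measure_of) (auto dest: openin_subset)

lemma continuous_map_cu_topology_measurable:
  assumes "continuous_map cu_topology euclideanreal h"
  shows "h \<in> borel_measurable Cborel"
proof (rule borel_measurableI)
  fix S :: "real set" assume "open S"
  then have "openin cu_topology {g \<in> topspace cu_topology. h g \<in> S}"
    using assms by (simp add: continuous_map_def)
  moreover have "h -` S \<inter> space Cborel = {g \<in> topspace cu_topology. h g \<in> S}"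
    by (auto simp: space_Cborel topspace_cu_topology)
  ultimately show "h -` S \<inter> space Cborel \<in> sets Cborel"
    by (simp add: openin_cu_topology_imp_sets_Cborel)
qed

lemma continuous_map_cu_topology_eval: "continuous_map cu_topology euclideanreal (\<lambda>g. g x)"
  unfolding continuous_map_def
proof (intro conjI allI impI)
  fix S :: "real set" assume "openin euclideanreal S"
  then have S: "open S" by simp
  show "openin cu_topology {g \<in> topspace cu_topology. g x \<in> S}"
    unfolding openin_cu_topology topspace_cu_topology
  proof (intro conjI ballI)
    fix g assume g: "g \<in> {g \<in> Cspace. g x \<in> S}"
    then obtain e where e: "e > 0" "ball (g x) e \<subseteq> S" using S openE by auto
    have "{h\<in>Cspace. \<forall>y\<in>{x}. \<bar>h y - g y\<bar> < e} \<subseteq> {g \<in> Cspace. g x \<in> S}"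
      using e by (auto simp: dist_real_def abs_minus_commute)
    then show "\<exists>K e. compact K \<and> e > 0 \<and> {h\<in>Cspace. \<forall>x\<in>K. \<bar>h x - g x\<bar> < e} \<subseteq> {g \<in> Cspace. g x \<in> S}"
      using e by (intro exI[of _ "{x}"] exI[of _ e]) simp
  qed blast
qed simp


lemma measurable_gauss_lik: "gauss_lik \<sigma> D \<in> borel_measurable Cborel"
  unfolding gauss_lik_def normal_density_def
  by (intro borel_measurable_prod measurable_compose[OF continuous_map_cu_topology_measurable[OF continuous_map_cu_topology_eval]]) measurable

lemma normal_density_le:
  shows "normal_density m \<sigma> x \<le> 1 / sqrt (2 * pi * \<sigma>\<^sup>2)"
proof -
  have "exp (- ((x - m)\<^sup>2) / (2 * \<sigma>\<^sup>2)) \<le> 1" by simp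
  then have "exp (- ((x - m)\<^sup>2) / (2 * \<sigma>\<^sup>2)) / sqrt (2 * pi * \<sigma>\<^sup>2) \<le> 1 / sqrt (2 * pi * \<sigma>\<^sup>2)"
    by (rule divide_right_mono) simp
  then show ?thesis by (simp add: normal_density_def)
qed

lemma gauss_lik_nonneg: "0 \<le> gauss_lik \<sigma> D g"
  unfolding gauss_lik_def by (simp add: prod_nonneg)

lemma gauss_lik_pos: "\<sigma> > 0 \<Longrightarrow> 0 < gauss_lik \<sigma> D g"
  unfolding gauss_lik_def by (simp add: prod_pos normal_density_pos)

lemma gauss_lik_le: "gauss_lik \<sigma> D g \<le> (1 / sqrt (2 * pi * \<sigma>\<^sup>2)) ^ length D"
  unfolding gauss_lik_def
  by (rule order_trans[OF prod_mono[where g="\<lambda>_. 1 / sqrt (2 * pi * \<sigma>\<^sup>2)"]])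
     (simp_all add: normal_density_le)

lemma nth_diff_le_dD:
  assumes "length D1 = length D2" "k < length D2"
  shows "\<bar>fst (D1!k) - fst (D2!k)\<bar> \<le> real_of_ereal (dD D1 D2)"
    and "\<bar>snd (D1!k) - snd (D2!k)\<bar> \<le> real_of_ereal (dD D1 D2)"
proof -
  have le_sqrt_sum: "\<bar>a k\<bar> \<le> sqrt (\<Sum>j<length D2. (a j)\<^sup>2)" for a :: "nat \<Rightarrow> real"
    using real_sqrt_le_mono[OF member_le_sum[of k "{..<length D2}" "\<lambda>j. (a j)\<^sup>2"]] assms(2)
    by simp
  have "real_of_ereal (dD D1 D2) =
      sqrt (\<Sum>j<length D2. (fst (D1!j) - fst (D2!j))\<^sup>2) + sqrt (\<Sum>j<length D2. (snd (D1!j) - snd (D2!j))\<^sup>2)"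
    using assms(1) by (simp add: dD_def)
  moreover have "0 \<le> sqrt (\<Sum>j<length D2. (a j)\<^sup>2)" for a :: "nat \<Rightarrow> real"
    by (simp add: sum_nonneg)
  ultimately show "\<bar>fst (D1!k) - fst (D2!k)\<bar> \<le> real_of_ereal (dD D1 D2)"
    and "\<bar>snd (D1!k) - snd (D2!k)\<bar> \<le> real_of_ereal (dD D1 D2)"
    using le_sqrt_sum[of "\<lambda>j. fst (D1!j) - fst (D2!j)"] le_sqrt_sum[of "\<lambda>j. snd (D1!j) - snd (D2!j)"]
    by (smt (verit))+
qed

lemma integral_gauss_lik_pos:
  assumes "prob_space M" "sets M = sets Cborel" "\<sigma> > 0"
  shows "0 < (\<integral>g. gauss_lik \<sigma> D g \<partial>M)"
proof -
  interpret prob_space M by fact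
  have "integrable M (gauss_lik \<sigma> D)"
    using measurable_gauss_lik measurable_cong_sets[OF assms(2) refl]
      gauss_lik_le[of \<sigma> D] gauss_lik_nonneg[of \<sigma> D]
    by (intro integrable_const_bound[where B="(1 / sqrt (2 * pi * \<sigma>\<^sup>2)) ^ length D"]) auto
  then show ?thesis
    using integral_less_AE_space[of "\<lambda>_. 0" "gauss_lik \<sigma> D"] gauss_lik_pos[OF assms(3)]
    by (simp add: emeasure_space_1)
qed

lemma integral_normalized_density:
  fixes L h :: "'a \<Rightarrow> real"
  assumes "h \<in> borel_measurable M" "L \<in> borel_measurable M" "\<And>x. 0 \<le> L x"
  shows "(\<integral>x. h x \<partial>density M (\<lambda>x. ennreal (L x / (\<integral>y. L y \<partial>M)))) =
    (\<integral>x. L x * h x \<partial>M) / (\<integral>y. L y \<partial>M)"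
proof -
  have "0 \<le> (\<integral>y. L y \<partial>M)" using assms(3) by simp
  then have "(\<integral>x. h x \<partial>density M (\<lambda>x. ennreal (L x / (\<integral>y. L y \<partial>M)))) =
      (\<integral>x. (L x / (\<integral>y. L y \<partial>M)) *\<^sub>R h x \<partial>M)"
    using assms by (intro integral_density) auto
  then show ?thesis by simp
qed

context
  fixes Ds :: "nat \<Rightarrow> dataset" and D :: dataset
  assumes dD_lim: "(\<lambda>i. dD (Ds i) D) \<longlonglongrightarrow> 0"
begin

lemma eventually_length_eq_dD: "eventually (\<lambda>i. length (Ds i) = length D) sequentially"
proof -
  have "eventually (\<lambda>i. dD (Ds i) D < 1) sequentially"
    using dD_lim by (rule order_tendstoD) simp
  then show ?thesis by eventually_elim (auto simp: dD_def split: if_splits)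
qed

lemma tendsto_real_of_ereal_dD: "(\<lambda>i. real_of_ereal (dD (Ds i) D)) \<longlonglongrightarrow> 0"
  using tendsto_ereal_realI[OF _ dD_lim] by (simp add: zero_ereal_def)

lemma tendsto_nth_dD:
  assumes "k < length D"
  shows "(\<lambda>i. fst (Ds i ! k)) \<longlonglongrightarrow> fst (D!k)" and "(\<lambda>i. snd (Ds i ! k)) \<longlonglongrightarrow> snd (D!k)"
proof -
  have "eventually (\<lambda>i. norm (fst (Ds i ! k) - fst (D!k)) \<le> real_of_ereal (dD (Ds i) D)) sequentially"
    and "eventually (\<lambda>i. norm (snd (Ds i ! k) - snd (D!k)) \<le> real_of_ereal (dD (Ds i) D)) sequentially"
    using eventually_length_eq_dD by (eventually_elim, use nth_diff_le_dD assms in auto)+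
  then have "(\<lambda>i. fst (Ds i ! k) - fst (D!k)) \<longlonglongrightarrow> 0" "(\<lambda>i. snd (Ds i ! k) - snd (D!k)) \<longlonglongrightarrow> 0"
    by (auto intro: Lim_null_comparison[OF _ tendsto_real_of_ereal_dD])
  then show "(\<lambda>i. fst (Ds i ! k)) \<longlonglongrightarrow> fst (D!k)" "(\<lambda>i. snd (Ds i ! k)) \<longlonglongrightarrow> snd (D!k)"
    by (simp_all add: LIM_zero_iff)
qed

lemma tendsto_gauss_lik:
  assumes "continuous_on UNIV g"
  shows "(\<lambda>i. gauss_lik \<sigma> (Ds i) g) \<longlonglongrightarrow> gauss_lik \<sigma> D g"
proof -
  have "(\<lambda>i. \<Prod>k<length D. normal_density (g (fst (Ds i!k))) \<sigma> (snd (Ds i!k)))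
      \<longlonglongrightarrow> (\<Prod>k<length D. normal_density (g (fst (D!k))) \<sigma> (snd (D!k)))"
  proof (rule tendsto_prod)
    fix k assume "k \<in> {..<length D}"
    then have "(\<lambda>i. g (fst (Ds i!k))) \<longlonglongrightarrow> g (fst (D!k))" "(\<lambda>i. snd (Ds i!k)) \<longlonglongrightarrow> snd (D!k)"
      using assms tendsto_nth_dD
      by (auto intro: isCont_tendsto_compose simp: continuous_on_eq_continuous_at)
    then show "(\<lambda>i. normal_density (g (fst (Ds i!k))) \<sigma> (snd (Ds i!k)))
        \<longlonglongrightarrow> normal_density (g (fst (D!k))) \<sigma> (snd (D!k))"
      unfolding normal_density_def by (cases "\<sigma> = 0") (auto intro!: tendsto_intros)
  qed
  then show ?thesis
    unfolding gauss_lik_def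
    by (rule Lim_transform_eventually) (use eventually_length_eq_dD in \<open>auto elim: eventually_mono\<close>)
qed

lemma tendsto_integral_gauss_lik_mult:
  assumes M: "finite_measure M" "sets M = sets Cborel"
    and h: "h \<in> borel_measurable Cborel" "\<And>g. g \<in> Cspace \<Longrightarrow> \<bar>h g\<bar> \<le> B"
  shows "(\<lambda>i. \<integral>g. gauss_lik \<sigma> (Ds i) g * h g \<partial>M) \<longlonglongrightarrow> (\<integral>g. gauss_lik \<sigma> D g * h g \<partial>M)"
proof -
  have space_M: "space M = Cspace" using sets_eq_imp_space_eq[OF M(2)] by (simp add: space_Cborel)
  have meas: "f \<in> borel_measurable M" if "f \<in> borel_measurable Cborel" for f :: "_ \<Rightarrow> real"
    using that measurable_cong_sets[OF M(2) refl] by blast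
  obtain N where N: "\<And>i. i \<ge> N \<Longrightarrow> length (Ds i) = length D"
    using eventually_length_eq_dD by (auto simp: eventually_sequentially)
  define c where "c = (1 / sqrt (2 * pi * \<sigma>\<^sup>2)) ^ length D"
  \<comment> \<open>c bounds the likelihood only once Ds i has the length of D, hence the shift by N.\<close>
  have "(\<lambda>i. \<integral>g. gauss_lik \<sigma> (Ds (i + N)) g * h g \<partial>M) \<longlonglongrightarrow> (\<integral>g. gauss_lik \<sigma> D g * h g \<partial>M)"
  proof (rule integral_dominated_convergence[where w="\<lambda>_. c * B"])
    show "AE g in M. (\<lambda>i. gauss_lik \<sigma> (Ds (i + N)) g * h g) \<longlonglongrightarrow> gauss_lik \<sigma> D g * h g"
      by (intro AE_I2 tendsto_mult tendsto_const LIMSEQ_ignore_initial_segment tendsto_gauss_lik)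
         (simp add: space_M Cspace_def)
    show "AE g in M. norm (gauss_lik \<sigma> (Ds (i + N)) g * h g) \<le> c * B" for i
    proof (rule AE_I2)
      fix g assume "g \<in> space M"
      then have "\<bar>h g\<bar> \<le> B" using h(2) space_M by auto
      moreover have "\<bar>gauss_lik \<sigma> (Ds (i + N)) g\<bar> \<le> c"
        using gauss_lik_le[of \<sigma> "Ds (i + N)" g] gauss_lik_nonneg N[of "i + N"] by (simp add: c_def)
      ultimately show "norm (gauss_lik \<sigma> (Ds (i + N)) g * h g) \<le> c * B"
        by (simp add: abs_mult mult_mono')
    qed
  qed (use M h(1) in \<open>auto intro!: meas borel_measurable_times measurable_gauss_lik finite_measure.integrable_const\<close>)
  then show ?thesis by (rule LIMSEQ_offset)
qed

end

lemma weak_conv_post_smooth: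
  assumes \<mu>: "prob_space \<mu>" "sets \<mu> = sets Cborel" and "\<sigma> > 0"
    and dD_lim: "(\<lambda>i. dD (Ds i) D) \<longlonglongrightarrow> 0"
  shows "weak_conv_C (\<lambda>i. post_smooth \<mu> \<sigma> (Ds i)) (post_smooth \<mu> \<sigma> D)"
  unfolding weak_conv_C_def
proof (intro allI impI, elim conjE exE)
  fix h B assume h: "continuous_map cu_topology euclideanreal h" "\<forall>g\<in>Cspace. \<bar>h g\<bar> \<le> B"
  have fin: "finite_measure \<mu>" using \<mu>(1) by (rule prob_space.finite_measure)
  have meas: "f \<in> borel_measurable \<mu>" if "f \<in> borel_measurable Cborel" for f :: "_ \<Rightarrow> real"
    using that measurable_cong_sets[OF \<mu>(2) refl] by blast
  have hm: "h \<in> borel_measurable Cborel" using h(1) by (rule continuous_map_cu_topology_measurable)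
  have post: "(\<integral>g. h g \<partial>post_smooth \<mu> \<sigma> D') =
      (\<integral>g. gauss_lik \<sigma> D' g * h g \<partial>\<mu>) / (\<integral>g. gauss_lik \<sigma> D' g \<partial>\<mu>)" for D'
    unfolding post_smooth_def
    by (simp add: integral_normalized_density meas hm measurable_gauss_lik gauss_lik_nonneg)
  have "(\<lambda>i. \<integral>g. gauss_lik \<sigma> (Ds i) g * h g \<partial>\<mu>) \<longlonglongrightarrow> (\<integral>g. gauss_lik \<sigma> D g * h g \<partial>\<mu>)"
    using h(2) by (intro tendsto_integral_gauss_lik_mult[OF dD_lim fin \<mu>(2) hm]) auto
  moreover have "(\<lambda>i. \<integral>g. gauss_lik \<sigma> (Ds i) g \<partial>\<mu>) \<longlonglongrightarrow> (\<integral>g. gauss_lik \<sigma> D g \<partial>\<mu>)"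
    using tendsto_integral_gauss_lik_mult[OF dD_lim fin \<mu>(2) borel_measurable_const, of 1 1] by simp
  moreover have "(\<integral>g. gauss_lik \<sigma> D g \<partial>\<mu>) \<noteq> 0"
    using integral_gauss_lik_pos[OF \<mu> \<open>\<sigma> > 0\<close>, of D] by simp
  ultimately show "(\<lambda>i. \<integral>g. h g \<partial>post_smooth \<mu> \<sigma> (Ds i)) \<longlonglongrightarrow> (\<integral>g. h g \<partial>post_smooth \<mu> \<sigma> D)"
    unfolding post by (rule tendsto_divide)
qed

theorem mainTheorem10:
  fixes P :: "'w measure" and fs fn :: "'w \<Rightarrow> real \<Rightarrow> real" and \<sigma> :: real
    and Ds :: "nat \<Rightarrow> dataset" and D :: dataset
  assumes "noisy_process P fs fn \<sigma>"
    and "(\<lambda>i. dD (Ds i) D) \<longlonglongrightarrow> 0"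
  shows "noisy_weak_conv (\<lambda>i. post_pred P fs \<sigma> (Ds i)) (post_pred P fs \<sigma> D)"
proof -
  have "prob_space P" "\<sigma> > 0" "fs \<in> measurable P Cborel"
    using assms(1) unfolding noisy_process_def by auto
  then have "prob_space (smooth_law P fs)" "sets (smooth_law P fs) = sets Cborel"
    unfolding smooth_law_def by (simp_all add: prob_space.prob_space_distr)
  then have "weak_conv_C (\<lambda>i. post_smooth (smooth_law P fs) \<sigma> (Ds i)) (post_smooth (smooth_law P fs) \<sigma> D)"
    using \<open>\<sigma> > 0\<close> assms(2) by (rule weak_conv_post_smooth)
  then show ?thesis
    unfolding noisy_weak_conv_def post_pred_def by simp
qed

end
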